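(* Let $\mathcal N$ be a finite ground set, $f:2^{\mathcal N}\to\mathbb R$ monotone and submodular, $k\ge1$ an integer, and $O$ an optimal solution to $\max\{f(S):|S|\le k\}$. Consider the algorithm: initialize $A\leftarrow\emptyset$; for each $u\in\mathcal N$ in turn, if $\Delta(u\mid A)\ge f(A)/k$ then $A\leftarrow A\cup\{u\}$. At termination of this algorithm, $f(O)\le2f(A)$.
   Context: $f$ is submodular if $f(T\cup\{x\})-f(T)\le f(S\cup\{x\})-f(S)$ for all $S\subseteq T\subseteq\mathcal N$, $x\notin T$; monotone if $f(S)\le f(T)$ for $S\subseteq T$. $\Delta(x\mid S)=f(S\cup\{x\})-f(S)$. *)

theory Defs
  imports Complex_Main
begin

definition marginal :: "('a set \<Rightarrow> real) \<Rightarrow> 'a \<Rightarrow> 'a set \<Rightarrow> real" where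
  "marginal f x S = f (S \<union> {x}) - f S"

definition monotone_set_fun :: "'a set \<Rightarrow> ('a set \<Rightarrow> real) \<Rightarrow> bool" where
  "monotone_set_fun N f \<longleftrightarrow> (\<forall>S T. S \<subseteq> T \<and> T \<subseteq> N \<longrightarrow> f S \<le> f T)"

definition submodular_set_fun :: "'a set \<Rightarrow> ('a set \<Rightarrow> real) \<Rightarrow> bool" where
  "submodular_set_fun N f \<longleftrightarrow>
     (\<forall>S T x. S \<subseteq> T \<and> T \<subseteq> N \<and> x \<in> N \<and> x \<notin> T \<longrightarrow>
        marginal f x T \<le> marginal f x S)"

definition thr_step :: "('a set \<Rightarrow> real) \<Rightarrow> nat \<Rightarrow> 'a \<Rightarrow> 'a set \<Rightarrow> 'a set" where
  "thr_step f k u A = (if marginal f u A \<ge> f A / real k then A \<union> {u} else A)"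

definition thr_alg :: "('a set \<Rightarrow> real) \<Rightarrow> nat \<Rightarrow> 'a list \<Rightarrow> 'a set" where
  "thr_alg f k us = fold (thr_step f k) us {}"

end

theory Submission
  imports Defs
begin

text \<open>
  An element u of O that the algorithm rejected had gain below f(A')/k for the current set A'
  at that moment. The final set A contains A', so by submodularity and monotonicity u still has
  gain below f(A)/k with respect to A. Hence
  f(O) \<le> f(A \<union> O) \<le> f(A) + \<Sum>u\<in>O-A. \<Delta>(u|A) \<le> f(A) + |O| f(A)/k \<le> 2 f(A).
\<close>

lemma subset_fold_thr_step: "A \<subseteq> fold (thr_step f k) us A"
proof (induction us arbitrary: A)
  case Nil
  then show ?case by simp
next
  case (Cons u us)
  have "A \<subseteq> thr_step f k u A"
    by (auto simp: thr_step_def)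
  with Cons.IH[of "thr_step f k u A"] show ?case
    by auto
qed

lemma fold_thr_step_subset: "fold (thr_step f k) us A \<subseteq> A \<union> set us"
proof (induction us arbitrary: A)
  case Nil
  then show ?case by simp
next
  case (Cons u us)
  have "thr_step f k u A \<subseteq> A \<union> {u}"
    by (auto simp: thr_step_def)
  with Cons.IH[of "thr_step f k u A"] show ?case
    by auto
qed

lemma marginal_lt_threshold_if_rejected:
  assumes mono: "monotone_set_fun N f" and sub: "submodular_set_fun N f"
    and "A \<subseteq> N" "set us \<subseteq> N" "u \<in> set us" "u \<notin> fold (thr_step f k) us A"
  shows "marginal f u (fold (thr_step f k) us A) < f (fold (thr_step f k) us A) / real k"
  using assms(3-)
proof (induction us arbitrary: A)
  case Nil
  then show ?case by simp
next
  case (Cons x xs)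
  define A' where "A' = thr_step f k x A"
  define F where "F = fold (thr_step f k) xs A'"
  have F: "fold (thr_step f k) (x # xs) A = F"
    by (simp add: F_def A'_def)
  have "A \<subseteq> A'" "A' \<subseteq> N"
    using Cons.prems by (auto simp: A'_def thr_step_def)
  moreover have "A' \<subseteq> F" "F \<subseteq> A' \<union> set xs"
    unfolding F_def by (rule subset_fold_thr_step, rule fold_thr_step_subset)
  ultimately have "A \<subseteq> F" "F \<subseteq> N"
    using Cons.prems by auto
  show ?case
  proof (cases "u \<in> set xs")
    case True
    with Cons.IH[of A'] Cons.prems \<open>A' \<subseteq> N\<close> show ?thesis
      by (simp add: A'_def)
  next
    case False
    with Cons.prems F have "u = x" "x \<notin> F"
      by auto
    with \<open>A' \<subseteq> F\<close> have "marginal f x A < f A / real k"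
      by (auto simp: A'_def thr_step_def split: if_splits)
    moreover have "marginal f x F \<le> marginal f x A"
      using sub \<open>A \<subseteq> F\<close> \<open>F \<subseteq> N\<close> \<open>x \<notin> F\<close> Cons.prems
      unfolding submodular_set_fun_def by auto
    moreover have "f A \<le> f F"
      using mono \<open>A \<subseteq> F\<close> \<open>F \<subseteq> N\<close> unfolding monotone_set_fun_def by auto
    then have "f A / real k \<le> f F / real k"
      by (simp add: divide_right_mono)
    ultimately show ?thesis
      using \<open>u = x\<close> F by auto
  qed
qed

lemma submodular_le_add_sum_marginal:
  assumes sub: "submodular_set_fun N f" and "A \<subseteq> N"
    and "finite D" "D \<subseteq> N" "D \<inter> A = {}"
  shows "f (A \<union> D) \<le> f A + (\<Sum>u\<in>D. marginal f u A)"
  using assms(3-)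
proof (induction D rule: finite_induct)
  case empty
  then show ?case by simp
next
  case (insert x D)
  have "marginal f x (A \<union> D) \<le> marginal f x A"
    using sub \<open>A \<subseteq> N\<close> insert.prems insert.hyps unfolding submodular_set_fun_def by auto
  moreover have "marginal f x (A \<union> D) = f (A \<union> insert x D) - f (A \<union> D)"
    by (simp add: marginal_def)
  ultimately show ?case
    using insert by auto
qed

lemma thr_alg_approximation:
  assumes mono: "monotone_set_fun N f" and sub: "submodular_set_fun N f"
    and nonneg: "\<forall>S\<subseteq>N. f S \<ge> 0"
    and "set us \<subseteq> N" "S \<subseteq> set us" "card S \<le> k"
  shows "f S \<le> 2 * f (thr_alg f k us)"
proof -
  define A where "A = thr_alg f k us"
  have "A \<subseteq> N"
    using fold_thr_step_subset[of f k us "{}"] \<open>set us \<subseteq> N\<close> by (auto simp: A_def thr_alg_def)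
  have "S \<subseteq> N" "finite S"
    using \<open>set us \<subseteq> N\<close> \<open>S \<subseteq> set us\<close> finite_subset by auto
  have rejected: "marginal f u A \<le> f A / real k" if "u \<in> S - A" for u
    using marginal_lt_threshold_if_rejected[OF mono sub, of "{}" us u k] that
      \<open>set us \<subseteq> N\<close> \<open>S \<subseteq> set us\<close> by (auto simp: A_def thr_alg_def)
  have "card (S - A) \<le> k"
    using \<open>finite S\<close> \<open>card S \<le> k\<close> card_mono[of S "S - A"] by auto
  moreover have "f A \<ge> 0"
    using nonneg \<open>A \<subseteq> N\<close> by simp
  ultimately have card_le: "real (card (S - A)) * (f A / real k) \<le> f A"
  proof (cases "k = 0")
    case False
    with \<open>card (S - A) \<le> k\<close> have "real (card (S - A)) / real k \<le> 1"
      by simp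
    then have "real (card (S - A)) / real k * f A \<le> 1 * f A"
      using \<open>f A \<ge> 0\<close> by (rule mult_right_mono)
    then show ?thesis
      by simp
  qed (simp add: \<open>f A \<ge> 0\<close>)
  have "f S \<le> f (A \<union> (S - A))"
    using mono \<open>S \<subseteq> N\<close> \<open>A \<subseteq> N\<close> unfolding monotone_set_fun_def by auto
  also have "\<dots> \<le> f A + (\<Sum>u\<in>S - A. marginal f u A)"
    using submodular_le_add_sum_marginal[OF sub \<open>A \<subseteq> N\<close>, of "S - A"] \<open>finite S\<close> \<open>S \<subseteq> N\<close>
    by blast
  also have "(\<Sum>u\<in>S - A. marginal f u A) \<le> real (card (S - A)) * (f A / real k)"
    using sum_bounded_above[of "S - A" "\<lambda>u. marginal f u A"] rejected by blast
  finally show ?thesis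
    using card_le by (simp add: A_def)
qed

theorem lemma9:
  fixes N :: "'a set" and f :: "'a set \<Rightarrow> real" and k :: nat
    and Opt :: "'a set" and us :: "'a list"
  assumes "finite N"
    and "distinct us" and "set us = N"
    and "\<forall>S\<subseteq>N. f S \<ge> 0"
    and "monotone_set_fun N f"
    and "submodular_set_fun N f"
    and "k \<ge> 1"
    and "Opt \<subseteq> N" and "card Opt \<le> k"
    and "\<forall>S\<subseteq>N. card S \<le> k \<longrightarrow> f S \<le> f Opt"
  shows "f Opt \<le> 2 * f (thr_alg f k us)"
  using thr_alg_approximation[OF assms(5,6,4)] assms(3,8,9) by simp

end
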